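(* Let $F$ be a rooted directed forest on $n \geq 1$ vertices and let $k \geq 2$ be a natural number. Then $\psi_b(F,k) \geq \frac{n+k}{2k}$. Moreover, this lower bound is tight (it is attained whenever the expression $\frac{n+k}{2k}$ is an integer).
   Context: A rooted directed forest is a disjoint union of rooted trees, each with all edges oriented away from its root. In a rooted directed forest, a leaf is a vertex of out-degree $0$ (this includes isolated vertices), and a branching vertex is a vertex of out-degree at least $2$. A set $P$ of vertices of $F$ is a branching $k$-path vertex cover of $F$ if every leaf of $F$ belongs to $P$ and every directed path on $k$ vertices (of length $k-1$) in $F$ contains a branching vertex or a vertex of $P$. The branching $k$-path vertex cover number $\psi_b(F,k)$ is the minimum size of a branching $k$-path vertex cover of $F$. *)

theory Defs
  imports Complex_Main
begin

text \<open>A rooted directed forest is given by a finite vertex set V and an edge relation E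
(E u v: arc from u to v, oriented away from the root). It is a disjoint union of
out-trees iff every vertex has in-degree at most one and there is no directed cycle.\<close>

definition rooted_forest :: "'a set \<Rightarrow> ('a \<Rightarrow> 'a \<Rightarrow> bool) \<Rightarrow> bool" where
  "rooted_forest V E \<longleftrightarrow> finite V
     \<and> (\<forall>u v. E u v \<longrightarrow> u \<in> V \<and> v \<in> V)
     \<and> (\<forall>u u' v. E u v \<and> E u' v \<longrightarrow> u = u')
     \<and> (\<forall>v. \<not> E\<^sup>+\<^sup>+ v v)"

definition out_deg :: "'a set \<Rightarrow> ('a \<Rightarrow> 'a \<Rightarrow> bool) \<Rightarrow> 'a \<Rightarrow> nat" where
  "out_deg V E v = card {w \<in> V. E v w}"

definition is_leaf :: "'a set \<Rightarrow> ('a \<Rightarrow> 'a \<Rightarrow> bool) \<Rightarrow> 'a \<Rightarrow> bool" where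
  "is_leaf V E v \<longleftrightarrow> v \<in> V \<and> out_deg V E v = 0"

definition is_branching :: "'a set \<Rightarrow> ('a \<Rightarrow> 'a \<Rightarrow> bool) \<Rightarrow> 'a \<Rightarrow> bool" where
  "is_branching V E v \<longleftrightarrow> v \<in> V \<and> out_deg V E v \<ge> 2"

definition dpath :: "'a set \<Rightarrow> ('a \<Rightarrow> 'a \<Rightarrow> bool) \<Rightarrow> nat \<Rightarrow> 'a list \<Rightarrow> bool" where
  "dpath V E k xs \<longleftrightarrow> length xs = k \<and> set xs \<subseteq> V \<and> distinct xs
     \<and> (\<forall>i. Suc i < k \<longrightarrow> E (xs ! i) (xs ! Suc i))"

definition is_bkpvc :: "'a set \<Rightarrow> ('a \<Rightarrow> 'a \<Rightarrow> bool) \<Rightarrow> nat \<Rightarrow> 'a set \<Rightarrow> bool" where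
  "is_bkpvc V E k P \<longleftrightarrow> P \<subseteq> V
     \<and> (\<forall>v. is_leaf V E v \<longrightarrow> v \<in> P)
     \<and> (\<forall>xs. dpath V E k xs \<longrightarrow> (\<exists>v \<in> set xs. is_branching V E v \<or> v \<in> P))"

definition psi_b :: "'a set \<Rightarrow> ('a \<Rightarrow> 'a \<Rightarrow> bool) \<Rightarrow> nat \<Rightarrow> nat" where
  "psi_b V E k = Min {card P | P. is_bkpvc V E k P}"

end

theory Submission
  imports Defs
begin

text \<open>Lower bound: let S be a cover P together with the branching vertices. Repeatedly
stepping to some child reaches S from any vertex in fewer than k steps, since otherwise the
walk is a k-vertex path avoiding S. Parents being unique, a vertex is determined by the
vertex of S it reaches and the number of steps, so n \<le> k |S|. Counting arcs in the forest
gives |B| < |L| \<le> |P| for the branching vertices B and leaves L, hence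
n \<le> k (2 |P| - 1), which is the bound.\<close>

lemma rooted_forest_has_root:
  assumes "rooted_forest V E" and "V \<noteq> {}"
  shows "\<exists>r\<in>V. \<forall>u. \<not> E u r"
proof -
  let ?R = "{(u, v). E u v}"
  have "?R \<subseteq> V \<times> V" and "finite V" and "acyclic ?R"
    using assms(1) by (auto simp: rooted_forest_def acyclic_def tranclp_unfold)
  then have "wf ?R"
    by (metis finite_SigmaI finite_acyclic_wf finite_subset)
  then obtain r where "r \<in> V" "\<And>u. (u, r) \<in> ?R \<Longrightarrow> u \<notin> V"
    using assms(2) wfE_min' by metis
  then show ?thesis
    using assms(1) by (auto simp: rooted_forest_def)
qed

lemma sum_out_deg_less_card:
  assumes "rooted_forest V E" and "V \<noteq> {}"
  shows "(\<Sum>v\<in>V. out_deg V E v) < card V"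
proof -
  have fin: "finite V"
    using assms(1) by (simp add: rooted_forest_def)
  obtain r where r: "r \<in> V" "\<And>u. \<not> E u r"
    using rooted_forest_has_root[OF assms] by blast
  define arcs where "arcs = (SIGMA v:V. {w \<in> V. E v w})"
  have "(\<Sum>v\<in>V. out_deg V E v) = card arcs"
    using fin by (simp add: arcs_def out_deg_def)
  also have "\<dots> = card (snd ` arcs)"
    using assms(1) by (intro card_image[symmetric] inj_onI) (auto simp: arcs_def rooted_forest_def; blast)
  also have "\<dots> \<le> card (V - {r})"
    using fin r by (intro card_mono) (auto simp: arcs_def)
  also have "\<dots> < card V"
    using fin r(1) by (rule card_Diff1_less)
  finally show ?thesis .
qed

lemma card_branching_less_card_leaves:
  assumes "rooted_forest V E" and "V \<noteq> {}"
  shows "card {v. is_branching V E v} < card {v. is_leaf V E v}"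
proof -
  have fin: "finite V"
    using assms(1) by (simp add: rooted_forest_def)
  let ?L = "{v. is_leaf V E v}" and ?B = "{v. is_branching V E v}"
  have "card (V - ?L) + card ?B = (\<Sum>v\<in>V. of_bool (v \<notin> ?L) + of_bool (v \<in> ?B))"
    using fin by (simp add: sum.distrib Diff_eq Int_def is_branching_def conj_commute)
  also have "\<dots> \<le> (\<Sum>v\<in>V. out_deg V E v)"
    by (intro sum_mono) (auto simp: is_leaf_def is_branching_def)
  also have "\<dots> < card V"
    by (rule sum_out_deg_less_card[OF assms])
  also have "\<dots> = card (V - ?L) + card ?L"
    using fin by (simp add: card_Diff_subset card_mono is_leaf_def subset_iff)
  finally show ?thesis by simp
qed

lemma is_leaf_iff:
  assumes "rooted_forest V E"
  shows "is_leaf V E v \<longleftrightarrow> v \<in> V \<and> (\<forall>w. \<not> E v w)"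
  using assms unfolding is_leaf_def out_deg_def rooted_forest_def by (auto simp: card_eq_0_iff) blast

lemma is_branchingI:
  assumes "rooted_forest V E" and "v \<in> V" and "E v w" and "E v w'" and "w \<noteq> w'"
  shows "is_branching V E v"
proof -
  have "finite {w \<in> V. E v w}" and "{w, w'} \<subseteq> {w \<in> V. E v w}"
    using assms by (auto simp: rooted_forest_def)
  then have "card {w, w'} \<le> out_deg V E v"
    unfolding out_deg_def by (rule card_mono)
  then show ?thesis
    using assms(2,5) by (simp add: is_branching_def)
qed

lemma relpowp_left_unique:
  fixes E :: "'a \<Rightarrow> 'a \<Rightarrow> bool"
  assumes "\<And>u u' v. E u v \<Longrightarrow> E u' v \<Longrightarrow> u = u'"
  shows "(E ^^ s) u w \<Longrightarrow> (E ^^ s) u' w \<Longrightarrow> u = u'"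
proof (induction s arbitrary: w)
  case 0
  then show ?case by simp
next
  case (Suc s)
  obtain v where "(E ^^ s) u v" "E v w"
    using Suc.prems(1) by (rule relpowp_Suc_E)
  moreover obtain v' where "(E ^^ s) u' v'" "E v' w"
    using Suc.prems(2) by (rule relpowp_Suc_E)
  ultimately show ?case
    using Suc.IH assms by metis
qed

lemma tranclp_chain:
  assumes "\<And>i. i < j \<Longrightarrow> E (f i) (f (Suc i))" and "i < j"
  shows "E\<^sup>+\<^sup>+ (f i) (f j)"
  using assms
proof (induction j)
  case 0
  then show ?case by simp
next
  case (Suc j)
  then show ?case
    by (cases "i = j") (auto intro: tranclp.trancl_into_trancl)
qed

lemma dpath_chain:
  assumes "rooted_forest V E"
    and "\<And>i. i < k \<Longrightarrow> f i \<in> V" and "\<And>i. Suc i < k \<Longrightarrow> E (f i) (f (Suc i))"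
  shows "dpath V E k (map f [0..<k])"
proof -
  have neq: "f i \<noteq> f j" if "i < j" "j < k" for i j
  proof
    assume "f i = f j"
    moreover have "E\<^sup>+\<^sup>+ (f i) (f j)"
      by (rule tranclp_chain[where j = j]) (use that assms(3) in auto)
    ultimately show False
      using assms(1) by (simp add: rooted_forest_def)
  qed
  have "inj_on f {0..<k}"
  proof (rule inj_onI)
    fix i j
    assume "i \<in> {0..<k}" "j \<in> {0..<k}" "f i = f j"
    then show "i = j"
      using neq[of i j] neq[of j i] by (cases i j rule: linorder_cases) auto
  qed
  then show ?thesis
    unfolding dpath_def using assms(2,3)
    by (intro conjI allI impI) (simp_all add: distinct_map image_subset_iff)
qed

lemma rooted_forest_reaches_within:
  assumes rf: "rooted_forest V E"
    and leaves: "\<And>v. is_leaf V E v \<Longrightarrow> v \<in> S"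
    and paths: "\<And>xs. dpath V E k xs \<Longrightarrow> set xs \<inter> S \<noteq> {}"
    and "x \<in> V"
  shows "\<exists>s<k. \<exists>y\<in>S. (E ^^ s) x y"
proof (rule ccontr)
  assume none: "\<not> ?thesis"
  have closed: "\<And>v w. E v w \<Longrightarrow> w \<in> V"
    using rf by (auto simp: rooted_forest_def)
  define ch where "ch v = (SOME w. E v w)" for v
  have step: "E v (ch v)" if "v \<in> V" "v \<notin> S" for v
  proof -
    have "\<exists>w. E v w"
      using that leaves is_leaf_iff[OF rf] by blast
    then show ?thesis
      unfolding ch_def by (rule someI_ex)
  qed
  have walk: "(ch ^^ i) x \<in> V \<and> (E ^^ i) x ((ch ^^ i) x)" if "i < k" for i
    using that
  proof (induction i)
    case 0
    then show ?case
      using \<open>x \<in> V\<close> by simp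
  next
    case (Suc i)
    then have "(ch ^^ i) x \<in> V" "(E ^^ i) x ((ch ^^ i) x)" "(ch ^^ i) x \<notin> S"
      using none by auto
    then have "E ((ch ^^ i) x) ((ch ^^ Suc i) x)"
      using step by simp
    then show ?case
      using \<open>(E ^^ i) x ((ch ^^ i) x)\<close> closed by auto
  qed
  have avoid: "(ch ^^ i) x \<notin> S" if "i < k" for i
    using walk[OF that] that none by blast
  have "dpath V E k (map (\<lambda>i. (ch ^^ i) x) [0..<k])"
    using walk avoid step by (intro dpath_chain[OF rf]) auto
  then show False
    using paths avoid by fastforce
qed

lemma card_le_mult_card_if_reaches_within:
  fixes E :: "'a \<Rightarrow> 'a \<Rightarrow> bool"
  assumes "\<And>u u' v. E u v \<Longrightarrow> E u' v \<Longrightarrow> u = u'" and "finite S"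
    and "\<And>x. x \<in> V \<Longrightarrow> \<exists>s<k. \<exists>y\<in>S. (E ^^ s) x y"
  shows "card V \<le> k * card S"
proof -
  obtain g where g: "\<And>x. x \<in> V \<Longrightarrow> snd (g x) < k \<and> fst (g x) \<in> S \<and> (E ^^ snd (g x)) x (fst (g x))"
    using bchoice[of V "\<lambda>x p. snd p < k \<and> fst p \<in> S \<and> (E ^^ snd p) x (fst p)"] assms(3) by force
  have "inj_on g V"
  proof (rule inj_onI)
    fix x x'
    assume "x \<in> V" "x' \<in> V" "g x = g x'"
    then show "x = x'"
      using g[of x] g[of x'] relpowp_left_unique[OF assms(1)] by auto
  qed
  moreover have "g ` V \<subseteq> S \<times> {..<k}"
    using g by (simp add: image_subset_iff mem_Times_iff)
  ultimately have "card V \<le> card (S \<times> {..<k})"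
    using assms(2) by (intro card_inj_on_le) auto
  then show ?thesis
    by (simp add: card_cartesian_product mult.commute)
qed

lemma is_bkpvc_vertex_set:
  assumes "k \<noteq> 0"
  shows "is_bkpvc V E k V"
  using assms unfolding is_bkpvc_def dpath_def is_leaf_def
  by (metis length_0_conv list.set_sel(1) subset_iff)

lemma finite_bkpvc_cards:
  assumes "finite V"
  shows "finite {card P | P. is_bkpvc V E k P}"
proof (rule finite_subset)
  show "{card P | P. is_bkpvc V E k P} \<subseteq> card ` Pow V"
    unfolding is_bkpvc_def by blast
qed (use assms in simp)

lemma psi_b_le:
  assumes "finite V" and "is_bkpvc V E k P"
  shows "psi_b V E k \<le> card P"
  unfolding psi_b_def using finite_bkpvc_cards[OF assms(1)] assms(2) by (auto intro: Min_le)

lemma psi_b_attained: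
  assumes "finite V" and "k \<noteq> 0"
  obtains P where "is_bkpvc V E k P" and "card P = psi_b V E k"
proof -
  have "{card P | P. is_bkpvc V E k P} \<noteq> {}"
    using is_bkpvc_vertex_set[OF assms(2)] by blast
  then have "psi_b V E k \<in> {card P | P. is_bkpvc V E k P}"
    unfolding psi_b_def using finite_bkpvc_cards[OF assms(1)] by (rule Min_in[rotated])
  then show ?thesis
    using that by auto
qed

lemma card_bkpvc_lower_bound:
  assumes rf: "rooted_forest V E" and "V \<noteq> {}" and cover: "is_bkpvc V E k P"
  shows "card V + k \<le> 2 * k * card P"
proof -
  let ?B = "{v. is_branching V E v}" and ?L = "{v. is_leaf V E v}"
  have fin: "finite V" and parent: "\<And>u u' v. E u v \<Longrightarrow> E u' v \<Longrightarrow> u = u'"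
    using rf unfolding rooted_forest_def by blast+
  have "P \<subseteq> V" and "?L \<subseteq> P"
    and paths: "\<And>xs. dpath V E k xs \<Longrightarrow> \<exists>v\<in>set xs. is_branching V E v \<or> v \<in> P"
    using cover unfolding is_bkpvc_def by auto
  then have finP: "finite P" and finB: "finite ?B" and "card ?L \<le> card P"
    using fin by (auto intro: finite_subset card_mono simp: is_branching_def)
  then have "card ?B < card P"
    using card_branching_less_card_leaves[OF rf \<open>V \<noteq> {}\<close>] by linarith
  have "card V \<le> k * card (P \<union> ?B)"
  proof (rule card_le_mult_card_if_reaches_within[OF parent])
    show "finite (P \<union> ?B)"
      using finP finB by simp
    show "\<exists>s<k. \<exists>y\<in>P \<union> ?B. (E ^^ s) x y" if "x \<in> V" for x
      using rf _ _ that
    proof (rule rooted_forest_reaches_within)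
      show "v \<in> P \<union> ?B" if "is_leaf V E v" for v
        using that \<open>?L \<subseteq> P\<close> by blast
      show "set xs \<inter> (P \<union> ?B) \<noteq> {}" if "dpath V E k xs" for xs
        using paths[OF that] by blast
    qed
  qed
  also have "\<dots> \<le> k * (card P + card ?B)"
    by (simp add: card_Un_le)
  also have "\<dots> \<le> k * (2 * card P - 1)"
    using \<open>card ?B < card P\<close> by (intro mult_le_mono2) linarith
  finally have "card V \<le> k * (2 * card P - 1)" .
  moreover have "k * (2 * card P - 1) + k = 2 * k * card P"
    using \<open>card ?B < card P\<close> by (cases "card P") (simp_all add: algebra_simps)
  ultimately show ?thesis
    by linarith
qed

lemma psi_b_lower_bound:
  assumes "rooted_forest V E" and "V \<noteq> {}" and "k \<noteq> 0"
  shows "(real (card V) + real k) / (2 * real k) \<le> real (psi_b V E k)"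
proof -
  obtain P where "is_bkpvc V E k P" and "card P = psi_b V E k"
    using psi_b_attained assms by (metis rooted_forest_def)
  then have "real (card V) + real k \<le> 2 * real k * real (psi_b V E k)"
    using card_bkpvc_lower_bound[OF assms(1,2)] by (metis of_nat_add of_nat_le_iff of_nat_mult of_nat_numeral)
  then show ?thesis
    using assms(3) by (simp add: divide_le_eq mult.commute)
qed

text \<open>The extremal forest: the vertices 0, ..., k (2 m - 1) - 1 are cut into 2 m - 1
blocks of k consecutive vertices, each a directed path, and the blocks are arranged as a
complete binary heap, the last vertex of block j being the parent of the first vertices of
blocks 2 j + 1 and 2 j + 2. Every k-vertex path meets a block end, the ends of the first
m - 1 blocks branch, and the ends of the m leaf blocks j \<ge> m - 1 form a cover of size m.\<close>

definition block_heap :: "nat \<Rightarrow> nat \<Rightarrow> nat \<Rightarrow> nat \<Rightarrow> bool" where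
  "block_heap k m u v \<longleftrightarrow> u < k * (2 * m - 1) \<and> v < k * (2 * m - 1) \<and>
     ((v = Suc u \<and> v mod k \<noteq> 0) \<or>
      (v mod k = 0 \<and> 0 < v div k \<and> u = (v div k - 1) div 2 * k + (k - 1)))"

lemma block_end_mod_div:
  fixes j k :: nat
  assumes "0 < k"
  shows "(j * k + (k - 1)) mod k = k - 1" and "(j * k + (k - 1)) div k = j"
proof -
  show "(j * k + (k - 1)) mod k = k - 1"
    by (subst mod_mult_self3) (use assms in simp)
  show "(j * k + (k - 1)) div k = j"
    by (subst div_mult_self3) (use assms in simp_all)
qed

lemma mem_block_ends_iff:
  fixes k v :: nat
  assumes "0 < k"
  shows "v \<in> (\<lambda>j. j * k + (k - 1)) ` J \<longleftrightarrow> v mod k = k - 1 \<and> v div k \<in> J"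
proof
  assume "v mod k = k - 1 \<and> v div k \<in> J"
  moreover have "v = v div k * k + v mod k"
    by (rule div_mult_mod_eq[symmetric])
  ultimately show "v \<in> (\<lambda>j. j * k + (k - 1)) ` J"
    by (intro image_eqI[of _ _ "v div k"]) auto
qed (use block_end_mod_div[OF assms] in auto)

lemma block_heap_less:
  assumes "0 < k" and "block_heap k m u v"
  shows "u < v"
  using assms(2) unfolding block_heap_def
proof (elim conjE disjE)
  assume v: "v mod k = 0" "0 < v div k" and u: "u = (v div k - 1) div 2 * k + (k - 1)"
  obtain j where j: "v div k = Suc j"
    using v(2) gr0_implies_Suc by blast
  have "u \<le> j * k + (k - 1)"
    using u j by (simp add: mult_le_mono1)
  also have "\<dots> < Suc j * k"
    using assms(1) by simp
  also have "\<dots> = v"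
    using v(1) j by (metis add_0_right div_mult_mod_eq)
  finally show "u < v" .
qed simp

lemma block_heap_parent:
  assumes "block_heap k m u v"
  shows "u = (if v mod k = 0 then (v div k - 1) div 2 * k + (k - 1) else v - 1)"
  using assms unfolding block_heap_def by auto

lemma rooted_forest_block_heap:
  assumes "0 < k"
  shows "rooted_forest {..<k * (2 * m - 1)} (block_heap k m)"
  unfolding rooted_forest_def
proof (intro conjI)
  show "\<forall>u v. block_heap k m u v \<longrightarrow> u \<in> {..<k * (2 * m - 1)} \<and> v \<in> {..<k * (2 * m - 1)}"
    unfolding block_heap_def by simp
  show "\<forall>u u' v. block_heap k m u v \<and> block_heap k m u' v \<longrightarrow> u = u'"
    using block_heap_parent by metis
  have "(block_heap k m)\<^sup>+\<^sup>+ u v \<Longrightarrow> u < v" for u v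
  proof (induction rule: tranclp_induct)
    case (base v)
    then show ?case
      using block_heap_less[OF assms] by blast
  next
    case (step v w)
    then show ?case
      using block_heap_less[OF assms, of m v w] by linarith
  qed
  then show "\<forall>v. \<not> (block_heap k m)\<^sup>+\<^sup>+ v v"
    by blast
qed simp

lemma block_heap_Suc_iff:
  assumes "0 < k" and "u mod k \<noteq> k - 1"
  shows "block_heap k m u v \<longleftrightarrow> v = Suc u \<and> Suc u < k * (2 * m - 1)"
proof -
  have "Suc u mod k \<noteq> 0"
    using assms by (simp add: mod_Suc)
  moreover have "u \<noteq> j * k + (k - 1)" for j
    using assms(2) block_end_mod_div(1)[OF assms(1)] by auto
  ultimately show ?thesis
    unfolding block_heap_def by auto
qed

lemma block_heap_children:
  assumes "0 < k" and "v < k * (2 * m - 1)" and "v mod k = k - 1" and "v div k < m - 1"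
  shows "block_heap k m v ((2 * (v div k) + 1) * k)" and "block_heap k m v ((2 * (v div k) + 2) * k)"
proof -
  have v: "v = v div k * k + (k - 1)"
    using assms(3) by (metis div_mult_mod_eq)
  have "(2 * (v div k) + 2) * k < (2 * m - 1) * k"
    using assms(1,4) by (intro mult_less_mono1) linarith+
  then have "(2 * (v div k) + 1) * k < k * (2 * m - 1)" "(2 * (v div k) + 2) * k < k * (2 * m - 1)"
    using assms(1) by (simp_all add: mult.commute)
  then show "block_heap k m v ((2 * (v div k) + 1) * k)" "block_heap k m v ((2 * (v div k) + 2) * k)"
    unfolding block_heap_def using assms(1,2) v by simp_all
qed

lemma block_heap_leaf:
  assumes "0 < k" and "is_leaf {..<k * (2 * m - 1)} (block_heap k m) v"
  shows "v mod k = k - 1" and "m - 1 \<le> v div k"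
proof -
  have v: "v < k * (2 * m - 1)" and no_child: "\<And>w. \<not> block_heap k m v w"
    using assms(2) is_leaf_iff[OF rooted_forest_block_heap[OF assms(1)]] by auto
  show last: "v mod k = k - 1"
  proof (rule ccontr)
    assume not_end: "v mod k \<noteq> k - 1"
    then have "Suc v mod k \<noteq> 0"
      using assms(1) by (simp add: mod_Suc)
    then have "Suc v < k * (2 * m - 1)"
      using v by (metis Suc_lessI mod_mult_self1_is_0)
    then show False
      using no_child block_heap_Suc_iff[OF assms(1) not_end] by blast
  qed
  show "m - 1 \<le> v div k"
    using block_heap_children(1)[OF assms(1) v last] no_child by (meson not_le)
qed

lemma block_heap_branching:
  assumes "0 < k" and "v < k * (2 * m - 1)" and "v mod k = k - 1" and "v div k < m - 1"
  shows "is_branching {..<k * (2 * m - 1)} (block_heap k m) v"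
  using rooted_forest_block_heap[OF assms(1)] _ block_heap_children[OF assms]
  by (rule is_branchingI) (use assms in simp_all)

lemma block_heap_dpath_meets_block_end:
  assumes "0 < k" and "dpath {..<k * (2 * m - 1)} (block_heap k m) k xs"
  shows "\<exists>v\<in>set xs. v mod k = k - 1"
proof (rule ccontr)
  assume "\<not> ?thesis"
  then have not_end: "(xs ! i) mod k \<noteq> k - 1" if "i < k" for i
    using assms(2) that by (auto simp: dpath_def)
  have "(xs ! i) mod k = (xs ! 0) mod k + i" if "i < k" for i
    using that
  proof (induction i)
    case (Suc i)
    then have "xs ! Suc i = Suc (xs ! i)"
      using assms(2) block_heap_Suc_iff[OF assms(1) not_end] by (auto simp: dpath_def)
    moreover have "Suc ((xs ! i) mod k) \<noteq> k"
      using not_end[of i] Suc.prems by linarith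
    ultimately show ?case
      using Suc by (simp add: mod_Suc)
  qed simp
  from this[of "k - 1"] have "(xs ! (k - 1)) mod k = (xs ! 0) mod k + (k - 1)"
    using assms(1) by simp
  moreover have "(xs ! (k - 1)) mod k < k"
    using assms(1) by simp
  ultimately have "(xs ! (k - 1)) mod k = k - 1"
    by linarith
  then show False
    using not_end[of "k - 1"] assms(1) by simp
qed

lemma is_bkpvc_block_heap:
  assumes "0 < k"
  shows "is_bkpvc {..<k * (2 * m - 1)} (block_heap k m) k ((\<lambda>j. j * k + (k - 1)) ` {m - 1..<2 * m - 1})"
    (is "is_bkpvc ?V ?E k ?P")
proof -
  have "?P \<subseteq> ?V"
  proof (rule image_subsetI)
    fix j
    assume "j \<in> {m - 1..<2 * m - 1}"
    then have "Suc j * k \<le> (2 * m - 1) * k"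
      by (intro mult_le_mono1) simp
    then show "j * k + (k - 1) \<in> ?V"
      using assms by (simp add: mult.commute)
  qed
  moreover have "v \<in> ?P" if leaf: "is_leaf ?V ?E v" for v
  proof -
    have "v < k * (2 * m - 1)"
      using leaf by (simp add: is_leaf_def)
    then have "v div k < 2 * m - 1"
      by (simp add: less_mult_imp_div_less mult.commute)
    then show ?thesis
      unfolding mem_block_ends_iff[OF assms] using block_heap_leaf[OF assms leaf] by simp
  qed
  moreover have "\<exists>v\<in>set xs. is_branching ?V ?E v \<or> v \<in> ?P" if path: "dpath ?V ?E k xs" for xs
  proof -
    obtain v where v: "v \<in> set xs" "v mod k = k - 1"
      using block_heap_dpath_meets_block_end[OF assms path] by blast
    moreover have "v < k * (2 * m - 1)"
      using path v(1) by (auto simp: dpath_def)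
    moreover have "v div k < 2 * m - 1"
      using calculation(3) by (simp add: less_mult_imp_div_less mult.commute)
    ultimately show ?thesis
      using block_heap_branching[OF assms] mem_block_ends_iff[OF assms] by (metis atLeastLessThan_iff not_le)
  qed
  ultimately show ?thesis
    unfolding is_bkpvc_def by blast
qed

lemma psi_b_block_heap:
  assumes "0 < k" and "0 < m"
  shows "psi_b {..<k * (2 * m - 1)} (block_heap k m) k = m"
proof (rule antisym)
  have "inj_on (\<lambda>j. j * k + (k - 1)) {m - 1..<2 * m - 1}"
    using block_end_mod_div(2)[OF assms(1)] by (intro inj_onI) metis
  then have "card ((\<lambda>j. j * k + (k - 1)) ` {m - 1..<2 * m - 1}) = m"
    using assms(2) by (simp add: card_image)
  moreover have "psi_b {..<k * (2 * m - 1)} (block_heap k m) k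
      \<le> card ((\<lambda>j. j * k + (k - 1)) ` {m - 1..<2 * m - 1})"
    by (rule psi_b_le[OF _ is_bkpvc_block_heap[OF assms(1)]]) simp
  ultimately show "psi_b {..<k * (2 * m - 1)} (block_heap k m) k \<le> m"
    by simp
next
  let ?V = "{..<k * (2 * m - 1)}"
  obtain P where P: "is_bkpvc ?V (block_heap k m) k P" "card P = psi_b ?V (block_heap k m) k"
    using psi_b_attained assms(1) by blast
  have "0 \<in> ?V"
    using assms by simp
  then have "?V \<noteq> {}"
    by blast
  then have "k * (2 * m - 1) + k \<le> 2 * k * psi_b ?V (block_heap k m) k"
    using card_bkpvc_lower_bound[OF rooted_forest_block_heap[OF assms(1)] _ P(1)] P(2) by simp
  moreover have "k * (2 * m - 1) + k = 2 * k * m"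
    using assms(2) by (cases m) (simp_all add: algebra_simps)
  ultimately show "m \<le> psi_b ?V (block_heap k m) k"
    using assms(1) by simp
qed

theorem theorem1:
  "(\<forall>(V :: 'a set) E n k. rooted_forest V E \<and> card V = n \<and> n \<ge> 1 \<and> k \<ge> 2 \<longrightarrow>
       real (psi_b V E k) \<ge> (real n + real k) / (2 * real k))
   \<and> (\<forall>n k. n \<ge> 1 \<and> k \<ge> 2 \<and> (2 * k) dvd (n + k) \<longrightarrow>
       (\<exists>(V :: nat set) E. rooted_forest V E \<and> card V = n \<and>
          real (psi_b V E k) = (real n + real k) / (2 * real k)))"
proof (intro conjI allI impI)
  fix V :: "'a set" and E n and k :: nat
  assume "rooted_forest V E \<and> card V = n \<and> n \<ge> 1 \<and> k \<ge> 2"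
  then show "(real n + real k) / (2 * real k) \<le> real (psi_b V E k)"
    using psi_b_lower_bound[of V E k] by fastforce
next
  fix n k :: nat
  assume "n \<ge> 1 \<and> k \<ge> 2 \<and> (2 * k) dvd (n + k)"
  then obtain m where "n + k = 2 * k * m" and "0 < m" and "0 < k"
    by (metis add_is_0 dvd_def le_zero_eq mult_is_0 not_gr0 one_neq_zero)
  then have n: "n = k * (2 * m - 1)"
    by (simp add: algebra_simps diff_mult_distrib2)
  have "real n + real k = 2 * real k * real m"
    using \<open>n + k = 2 * k * m\<close> by (metis of_nat_add of_nat_mult of_nat_numeral)
  moreover have "psi_b {..<n} (block_heap k m) k = m"
    using psi_b_block_heap[OF \<open>0 < k\<close> \<open>0 < m\<close>] n by simp
  ultimately have "real (psi_b {..<n} (block_heap k m) k) = (real n + real k) / (2 * real k)"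
    using \<open>0 < k\<close> by simp
  moreover have "rooted_forest {..<n} (block_heap k m)"
    using rooted_forest_block_heap[OF \<open>0 < k\<close>] n by simp
  ultimately show "\<exists>(V :: nat set) E. rooted_forest V E \<and> card V = n \<and>
      real (psi_b V E k) = (real n + real k) / (2 * real k)"
    by (intro exI[of _ "{..<n}"] exI[of _ "block_heap k m"]) simp
qed

end
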